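(* Let $\Gamma$ be a group that is nilpotent of class $\le n$, let $S\subseteq\Gamma\setminus\{\mathbb{I}\}$ be a generating set, $G:=\mathrm{Cay}(\Gamma,S)$, and let $r\ge 2^{n+2}$ be an integer. Let $h\in S$ be such that $\{\mathbb{I},h\}$ is an $r$-local $2$-separator of $G$, suppose that $G$ has no $r$-local cutvertex, and suppose that $h$ is not an involution. Then there is no $g\in S$ such that $g$ traverses $\{\mathbb{I},h\}$ at $\mathbb{I}$, the word $gh^2$ strongly traverses $\{\mathbb{I},h\}$, and both words $g^{-1}h^2g^{-1}h^{-1}$ and $ghgh$ are morphemes of $\Gamma$ in $S$.
   Context: Generating sets are closed under inverses; $\mathrm{Cay}(\Gamma,S)$ is the simple graph on $\Gamma$ with edges $\{g,gs\}$. $a\equiv b$ means $a=b$ or $a=b^{-1}$; $\Gamma$ is nilpotent of class $\le n$ if $[g,h]_n=\mathbb{I}$ for all $g\not\equiv h$, where $[g,h]_1=gh^{-1}g^{-1}h$ and $[g,h]_n$ is the reduced form of $g[g,h]_{n-1}^{-1}g^{-1}[g,h]_{n-1}$. Ball $B_r(v)$: subgraph of all vertices and edges on closed walks of length $\le r$ through $v$; $v$ is an $r$-local cutvertex if $B_r(v)-v$ is disconnected. For $X=\{v_0,v_1\}$, $N(X)$ is the set of vertices outside $X$ adjacent to $X$; the connectivity graph $C_r(v_0,v_1)$ has vertex set $N(X)$, $a,b$ adjacent if for some $i$ they lie in the same component of $B_r(v_i)-v_0-v_1$; $X$ is an $r$-local $2$-separator if $C_r(v_0,v_1)$ is disconnected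 and $d_G(v_0,v_1)\le r/2$; the $r$-local components at $X$ are the components of $C_r(v_0,v_1)$. An element $g\in S$ traverses $X$ at $x\in X$ if the vertices $xg^{-1}$ and $xg$ lie in distinct $r$-local components at $X$. A traversal of $X$ is a walk whose ends lie in distinct $r$-local components at $X$ and whose internal vertices all lie in $X$; it is strong if it has exactly two internal vertices. A word $w=a_1\cdots a_k$ in $S$ strongly traverses $X$ if for some vertex $v$ the walk $v,va_1,\ldots,va_1\cdots a_k$ has a subwalk that is a strong traversal of $X$. A morpheme of $\Gamma$ in $S$ is a nonempty word in $S$ evaluating to $\mathbb{I}$ none of whose nonempty proper contiguous subwords evaluates to $\mathbb{I}$. *)

theory Defs
  imports "HOL-Algebra.Generated_Groups"
begin

primrec itcomm :: "('a,'b) monoid_scheme \<Rightarrow> nat \<Rightarrow> 'a \<Rightarrow> 'a \<Rightarrow> 'a" where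
  "itcomm G 0 g h = h"
| "itcomm G (Suc k) g h =
     g \<otimes>\<^bsub>G\<^esub> inv\<^bsub>G\<^esub> (itcomm G k g h) \<otimes>\<^bsub>G\<^esub> inv\<^bsub>G\<^esub> g \<otimes>\<^bsub>G\<^esub> itcomm G k g h"

definition equiv_inv :: "('a,'b) monoid_scheme \<Rightarrow> 'a \<Rightarrow> 'a \<Rightarrow> bool" where
  "equiv_inv G a b \<longleftrightarrow> a = b \<or> a = inv\<^bsub>G\<^esub> b"

definition nilpotent_class_le :: "('a,'b) monoid_scheme \<Rightarrow> nat \<Rightarrow> bool" where
  "nilpotent_class_le G n \<longleftrightarrow>
     (\<forall>g\<in>carrier G. \<forall>h\<in>carrier G. \<not> equiv_inv G g h \<longrightarrow> itcomm G n g h = \<one>\<^bsub>G\<^esub>)"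

definition generating_set :: "('a,'b) monoid_scheme \<Rightarrow> 'a set \<Rightarrow> bool" where
  "generating_set G S \<longleftrightarrow> S \<subseteq> carrier G \<and> (\<forall>s\<in>S. inv\<^bsub>G\<^esub> s \<in> S) \<and> generate G S = carrier G"

definition word_eval :: "('a,'b) monoid_scheme \<Rightarrow> 'a list \<Rightarrow> 'a" where
  "word_eval G w = foldr (\<lambda>x y. x \<otimes>\<^bsub>G\<^esub> y) w \<one>\<^bsub>G\<^esub>"

definition morpheme :: "('a,'b) monoid_scheme \<Rightarrow> 'a set \<Rightarrow> 'a list \<Rightarrow> bool" where
  "morpheme G S w \<longleftrightarrow> w \<noteq> [] \<and> set w \<subseteq> S \<and> word_eval G w = \<one>\<^bsub>G\<^esub> \<and>
     (\<forall>i j. i < j \<and> j \<le> length w \<and> (i, j) \<noteq> (0, length w) \<longrightarrow>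
        word_eval G (take (j - i) (drop i w)) \<noteq> \<one>\<^bsub>G\<^esub>)"

definition cay_adj :: "('a,'b) monoid_scheme \<Rightarrow> 'a set \<Rightarrow> 'a \<Rightarrow> 'a \<Rightarrow> bool" where
  "cay_adj G S x y \<longleftrightarrow> x \<in> carrier G \<and> y \<in> carrier G \<and> (\<exists>s\<in>S. y = x \<otimes>\<^bsub>G\<^esub> s)"

text \<open>A walk is a nonempty vertex list; its length is (number of entries - 1).\<close>
definition is_walk :: "('a,'b) monoid_scheme \<Rightarrow> 'a set \<Rightarrow> 'a list \<Rightarrow> bool" where
  "is_walk G S ws \<longleftrightarrow> ws \<noteq> [] \<and> set ws \<subseteq> carrier G \<and>
     (\<forall>i. Suc i < length ws \<longrightarrow> cay_adj G S (ws ! i) (ws ! Suc i))"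

definition closed_walk_through :: "('a,'b) monoid_scheme \<Rightarrow> 'a set \<Rightarrow> nat \<Rightarrow> 'a \<Rightarrow> 'a list \<Rightarrow> bool" where
  "closed_walk_through G S r v ws \<longleftrightarrow>
     is_walk G S ws \<and> hd ws = last ws \<and> length ws \<le> Suc r \<and> v \<in> set ws"

definition ball_verts :: "('a,'b) monoid_scheme \<Rightarrow> 'a set \<Rightarrow> nat \<Rightarrow> 'a \<Rightarrow> 'a set" where
  "ball_verts G S r v = {u. \<exists>ws. closed_walk_through G S r v ws \<and> u \<in> set ws}"

definition ball_edges :: "('a,'b) monoid_scheme \<Rightarrow> 'a set \<Rightarrow> nat \<Rightarrow> 'a \<Rightarrow> 'a set set" where
  "ball_edges G S r v =
     {{ws ! i, ws ! Suc i} | ws i. closed_walk_through G S r v ws \<and> Suc i < length ws}"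

definition sg_conn :: "'a set \<Rightarrow> 'a set set \<Rightarrow> 'a \<Rightarrow> 'a \<Rightarrow> bool" where
  "sg_conn V E a b \<longleftrightarrow> a \<in> V \<and> b \<in> V \<and>
     (a, b) \<in> {(x, y). {x, y} \<in> E \<and> x \<in> V \<and> y \<in> V}\<^sup>*"

definition sg_disconnected :: "'a set \<Rightarrow> 'a set set \<Rightarrow> bool" where
  "sg_disconnected V E \<longleftrightarrow> (\<exists>a\<in>V. \<exists>b\<in>V. \<not> sg_conn V E a b)"

definition ball_del_verts :: "('a,'b) monoid_scheme \<Rightarrow> 'a set \<Rightarrow> nat \<Rightarrow> 'a \<Rightarrow> 'a set \<Rightarrow> 'a set" where
  "ball_del_verts G S r v X = ball_verts G S r v - X"

definition ball_del_edges :: "('a,'b) monoid_scheme \<Rightarrow> 'a set \<Rightarrow> nat \<Rightarrow> 'a \<Rightarrow> 'a set \<Rightarrow> 'a set set" where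
  "ball_del_edges G S r v X = {e \<in> ball_edges G S r v. e \<inter> X = {}}"

definition local_cutvertex :: "('a,'b) monoid_scheme \<Rightarrow> 'a set \<Rightarrow> nat \<Rightarrow> 'a \<Rightarrow> bool" where
  "local_cutvertex G S r v \<longleftrightarrow> v \<in> carrier G \<and>
     sg_disconnected (ball_del_verts G S r v {v}) (ball_del_edges G S r v {v})"

definition nbhd :: "('a,'b) monoid_scheme \<Rightarrow> 'a set \<Rightarrow> 'a set \<Rightarrow> 'a set" where
  "nbhd G S X = {u \<in> carrier G - X. \<exists>x\<in>X. cay_adj G S x u}"

definition conn_adj :: "('a,'b) monoid_scheme \<Rightarrow> 'a set \<Rightarrow> nat \<Rightarrow> 'a \<Rightarrow> 'a \<Rightarrow> 'a \<Rightarrow> 'a \<Rightarrow> bool" where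
  "conn_adj G S r v0 v1 a b \<longleftrightarrow> a \<in> nbhd G S {v0, v1} \<and> b \<in> nbhd G S {v0, v1} \<and>
     (\<exists>vi\<in>{v0, v1}. sg_conn (ball_del_verts G S r vi {v0, v1}) (ball_del_edges G S r vi {v0, v1}) a b)"

definition same_local_comp :: "('a,'b) monoid_scheme \<Rightarrow> 'a set \<Rightarrow> nat \<Rightarrow> 'a \<Rightarrow> 'a \<Rightarrow> 'a \<Rightarrow> 'a \<Rightarrow> bool" where
  "same_local_comp G S r v0 v1 a b \<longleftrightarrow> a \<in> nbhd G S {v0, v1} \<and> b \<in> nbhd G S {v0, v1} \<and>
     (a, b) \<in> {(x, y). conn_adj G S r v0 v1 x y}\<^sup>*"

definition distinct_local_comps :: "('a,'b) monoid_scheme \<Rightarrow> 'a set \<Rightarrow> nat \<Rightarrow> 'a \<Rightarrow> 'a \<Rightarrow> 'a \<Rightarrow> 'a \<Rightarrow> bool" where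
  "distinct_local_comps G S r v0 v1 a b \<longleftrightarrow> a \<in> nbhd G S {v0, v1} \<and> b \<in> nbhd G S {v0, v1} \<and>
     \<not> same_local_comp G S r v0 v1 a b"

definition local_2sep :: "('a,'b) monoid_scheme \<Rightarrow> 'a set \<Rightarrow> nat \<Rightarrow> 'a \<Rightarrow> 'a \<Rightarrow> bool" where
  "local_2sep G S r v0 v1 \<longleftrightarrow> v0 \<in> carrier G \<and> v1 \<in> carrier G \<and> v0 \<noteq> v1 \<and>
     (\<exists>a\<in>nbhd G S {v0, v1}. \<exists>b\<in>nbhd G S {v0, v1}. \<not> same_local_comp G S r v0 v1 a b) \<and>
     (\<exists>ws. is_walk G S ws \<and> hd ws = v0 \<and> last ws = v1 \<and> 2 * (length ws - 1) \<le> r)"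

definition traverses_at :: "('a,'b) monoid_scheme \<Rightarrow> 'a set \<Rightarrow> nat \<Rightarrow> 'a \<Rightarrow> 'a \<Rightarrow> 'a \<Rightarrow> 'a \<Rightarrow> bool" where
  "traverses_at G S r v0 v1 g x \<longleftrightarrow> g \<in> S \<and> x \<in> {v0, v1} \<and>
     distinct_local_comps G S r v0 v1 (x \<otimes>\<^bsub>G\<^esub> inv\<^bsub>G\<^esub> g) (x \<otimes>\<^bsub>G\<^esub> g)"

definition strong_traversal :: "('a,'b) monoid_scheme \<Rightarrow> 'a set \<Rightarrow> nat \<Rightarrow> 'a \<Rightarrow> 'a \<Rightarrow> 'a list \<Rightarrow> bool" where
  "strong_traversal G S r v0 v1 ws \<longleftrightarrow> is_walk G S ws \<and> length ws = 4 \<and>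
     ws ! 1 \<in> {v0, v1} \<and> ws ! 2 \<in> {v0, v1} \<and>
     distinct_local_comps G S r v0 v1 (ws ! 0) (ws ! 3)"

definition word_walk :: "('a,'b) monoid_scheme \<Rightarrow> 'a \<Rightarrow> 'a list \<Rightarrow> 'a list" where
  "word_walk G v w = map (\<lambda>i. foldl (\<lambda>x y. x \<otimes>\<^bsub>G\<^esub> y) v (take i w)) [0..<Suc (length w)]"

definition strongly_traverses :: "('a,'b) monoid_scheme \<Rightarrow> 'a set \<Rightarrow> nat \<Rightarrow> 'a \<Rightarrow> 'a \<Rightarrow> 'a list \<Rightarrow> bool" where
  "strongly_traverses G S r v0 v1 w \<longleftrightarrow> set w \<subseteq> S \<and>
     (\<exists>v\<in>carrier G. \<exists>i. strong_traversal G S r v0 v1 (take 4 (drop i (word_walk G v w))))"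

end

theory Submission
  imports Defs "HOL-Algebra.Multiplicative_Group"
begin

(* The two morphemes give the relations (gh)^2 = h^3 = 1. Conjugation by the involution
   u = gh inverts the commutator c = u h^-1 u^-1 h, so the iterated commutator [u,h]_n equals
   c^(2^(n-1)), and nilpotency makes the order M of d = c^-1 = h g^-2 a divisor of 2^(n-1).
   The word (g^-1 h g^-1)^M, whose letter is conjugate to d, then traces a closed walk of
   length 3M <= r through 1. None of its interior vertices is 1 or h: each such coincidence
   would force g and h to commute, or give the element g h g^-1 of order 3 a power-of-two
   order. So the walk joins g^-1 to g in B_r(1) - {1, h}, and g cannot traverse {1, h} at 1. *)

context group begin

lemma inv_mult_cancel_left [simp]:
  "a \<in> carrier G \<Longrightarrow> z \<in> carrier G \<Longrightarrow> inv a \<otimes> (a \<otimes> z) = z"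
  by (simp flip: m_assoc)

lemma mult_inv_cancel_left [simp]:
  "a \<in> carrier G \<Longrightarrow> z \<in> carrier G \<Longrightarrow> a \<otimes> (inv a \<otimes> z) = z"
  by (simp flip: m_assoc)

lemma conj_nat_pow:
  assumes "a \<in> carrier G" "x \<in> carrier G"
  shows "a \<otimes> x [^] (m :: nat) \<otimes> inv a = (a \<otimes> x \<otimes> inv a) [^] m"
proof (induction m)
  case 0
  then show ?case using assms by simp
next
  case (Suc m)
  have "a \<otimes> x [^] Suc m \<otimes> inv a = (a \<otimes> x [^] m \<otimes> inv a) \<otimes> (a \<otimes> x \<otimes> inv a)"
    using assms by (simp add: m_assoc)
  then show ?case using Suc by simp
qed

lemma nat_pow_commute_self:
  "x \<in> carrier G \<Longrightarrow> x [^] (n :: nat) \<otimes> x = x \<otimes> x [^] n"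
  using nat_pow_Suc2[of x n] by simp

lemma involution_inverts_commutator:
  assumes u: "u \<in> carrier G" and y: "y \<in> carrier G" and uu: "u \<otimes> u = \<one>"
  shows "u \<otimes> inv (u \<otimes> inv y \<otimes> inv u \<otimes> y) \<otimes> inv u = u \<otimes> inv y \<otimes> inv u \<otimes> y"
proof -
  have "inv u = u" using u uu inv_equality by blast
  moreover have "u \<otimes> (u \<otimes> z) = z" if "z \<in> carrier G" for z
    using that u uu by (simp flip: m_assoc)
  ultimately show ?thesis using u y uu by (simp add: inv_mult_group m_assoc)
qed

lemma itcomm_involution:
  assumes u: "u \<in> carrier G" and y: "y \<in> carrier G" and uu: "u \<otimes> u = \<one>"
  shows "itcomm G (Suc k) u y = (u \<otimes> inv y \<otimes> inv u \<otimes> y) [^] (2 ^ k :: nat)"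
proof (induction k)
  case 0
  then show ?case using u y by simp
next
  case (Suc k)
  define c where "c = u \<otimes> inv y \<otimes> inv u \<otimes> y"
  define N :: nat where "N = 2 ^ k"
  have c: "c \<in> carrier G" using u y by (simp add: c_def)
  have "u \<otimes> inv (c [^] N) \<otimes> inv u = c [^] N"
    using involution_inverts_commutator[OF assms] conj_nat_pow[of u "inv c" N] u c
    by (simp add: c_def nat_pow_inv)
  then have "itcomm G (Suc (Suc k)) u y = c [^] N \<otimes> c [^] N"
    using Suc by (simp add: c_def N_def)
  also have "\<dots> = c [^] (2 ^ Suc k :: nat)"
    using c by (simp add: N_def nat_pow_mult mult_2)
  finally show ?case by (simp add: c_def)
qed

lemma eq_one_if_coprime_exponents:
  assumes "x \<in> carrier G" "x [^] (a :: nat) = \<one>" "x [^] (b :: nat) = \<one>" "coprime a b"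
  shows "x = \<one>"
proof -
  have "ord x dvd a" "ord x dvd b" using assms by (simp_all add: pow_eq_id)
  then have "ord x = 1" using assms(4) coprime_common_divisor_nat by blast
  then show ?thesis using ord_eq_1[OF assms(1)] by blast
qed

end

lemma is_walk_map_upt:
  assumes "\<And>i. f i \<in> carrier G" "\<And>i. \<exists>s\<in>S. f (Suc i) = f i \<otimes>\<^bsub>G\<^esub> s"
  shows "is_walk G S (map f [0..<Suc N])"
  using assms by (auto simp: is_walk_def cay_adj_def nth_map_upt simp del: upt_Suc)

lemma sg_conn_chain:
  assumes "\<And>i. a \<le> i \<Longrightarrow> i \<le> b \<Longrightarrow> f i \<in> V"
    and "\<And>i. a \<le> i \<Longrightarrow> i < b \<Longrightarrow> {f i, f (Suc i)} \<in> E"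
    and "a \<le> b"
  shows "sg_conn V E (f a) (f b)"
  using assms
proof (induction b)
  case 0
  then show ?case by (simp add: sg_conn_def)
next
  case (Suc b)
  show ?case
  proof (cases "a = Suc b")
    case True
    then show ?thesis using Suc.prems(1) by (simp add: sg_conn_def)
  next
    case False
    then have "sg_conn V E (f a) (f b)" using Suc by simp
    then show ?thesis
      using Suc.prems False unfolding sg_conn_def by (auto intro: rtrancl_into_rtrancl)
  qed
qed

lemma closed_walk_interior_conn:
  assumes walk: "closed_walk_through G S r v ws"
    and avoid: "\<And>k. 0 < k \<Longrightarrow> Suc k < length ws \<Longrightarrow> ws ! k \<notin> X"
    and "0 < i" "i \<le> j" "Suc j < length ws"
  shows "sg_conn (ball_del_verts G S r v X) (ball_del_edges G S r v X) (ws ! i) (ws ! j)"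
proof (rule sg_conn_chain[where f = "(!) ws"])
  fix k assume "i \<le> k" "k \<le> j"
  then show "ws ! k \<in> ball_del_verts G S r v X"
    using walk avoid assms(3-5) unfolding ball_del_verts_def ball_verts_def by fastforce
next
  fix k assume "i \<le> k" "k < j"
  then have "{ws ! k, ws ! Suc k} \<in> ball_edges G S r v"
    using walk assms(5) unfolding ball_edges_def by fastforce
  then show "{ws ! k, ws ! Suc k} \<in> ball_del_edges G S r v X"
    using avoid assms(3-5) \<open>i \<le> k\<close> \<open>k < j\<close> unfolding ball_del_edges_def by auto
qed (use assms in auto)

lemma traverses_at_not_conn:
  assumes "traverses_at G S r v0 v1 s x"
  shows "\<not> sg_conn (ball_del_verts G S r x {v0, v1}) (ball_del_edges G S r x {v0, v1})
           (x \<otimes>\<^bsub>G\<^esub> inv\<^bsub>G\<^esub> s) (x \<otimes>\<^bsub>G\<^esub> s)"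
  using assms
  by (auto simp: traverses_at_def distinct_local_comps_def same_local_comp_def conn_adj_def)

lemma morpheme_eval:
  "morpheme G S w \<Longrightarrow> word_eval G w = \<one>\<^bsub>G\<^esub>"
  by (simp add: morpheme_def)

lemma morpheme_prefix_neq_one:
  assumes "morpheme G S w" "0 < j" "j < length w"
  shows "word_eval G (take j w) \<noteq> \<one>\<^bsub>G\<^esub>"
proof -
  have "\<forall>i j. i < j \<and> j \<le> length w \<and> (i, j) \<noteq> (0, length w) \<longrightarrow>
      word_eval G (take (j - i) (drop i w)) \<noteq> \<one>\<^bsub>G\<^esub>"
    using assms(1) by (simp add: morpheme_def)
  from this[rule_format, of 0 j] show ?thesis using assms(2,3) by simp
qed

locale relator_pair = group +
  fixes g h
  assumes g_closed [simp]: "g \<in> carrier G" and h_closed [simp]: "h \<in> carrier G"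
    and relator_ghgh: "g \<otimes> h \<otimes> g \<otimes> h = \<one>"
    and relator_ghhgh: "inv g \<otimes> h \<otimes> h \<otimes> inv g \<otimes> inv h = \<one>"
begin

definition d :: 'a where "d = h \<otimes> inv g \<otimes> inv g"

lemma d_closed [simp]: "d \<in> carrier G"
  by (simp add: d_def)

lemma ghg_eq_inv_h: "g \<otimes> h \<otimes> g = inv h"
  using inv_equality[OF relator_ghgh] by simp

lemma hgh_eq_inv_g: "h \<otimes> g \<otimes> h = inv g"
proof -
  have "g \<otimes> (h \<otimes> g \<otimes> h) = \<one>" using relator_ghgh by (simp add: m_assoc)
  then have "(h \<otimes> g \<otimes> h) \<otimes> g = \<one>" by (rule inv_comm) simp_all
  from inv_equality[OF this] show ?thesis by simp
qed

lemma hh_eq_inv_h: "h \<otimes> h = inv h"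
proof -
  have "h \<otimes> h \<otimes> inv g \<otimes> inv h = g"
    using relator_ghhgh inv_solve_left'[of \<one> g "h \<otimes> h \<otimes> inv g \<otimes> inv h"] by (simp add: m_assoc)
  then have "h \<otimes> h = g \<otimes> h \<otimes> g" by (simp add: inv_solve_right')
  then show ?thesis by (simp add: ghg_eq_inv_h)
qed

lemma h_cube: "h [^] (3 :: nat) = \<one>"
  by (simp add: numeral_3_eq_3 hh_eq_inv_h)

lemma gh_involution: "(g \<otimes> h) \<otimes> (g \<otimes> h) = \<one>"
  using relator_ghgh by (simp add: m_assoc)

lemma commutator_gh_h_eq_inv_d: "(g \<otimes> h) \<otimes> inv h \<otimes> inv (g \<otimes> h) \<otimes> h = inv d"
proof -
  have "inv h \<otimes> inv g \<otimes> h = inv h \<otimes> (h \<otimes> g \<otimes> h) \<otimes> h" by (simp add: hgh_eq_inv_g)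
  also have "\<dots> = g \<otimes> (h \<otimes> h)" by (simp add: m_assoc)
  finally have "inv h \<otimes> inv g \<otimes> h = g \<otimes> inv h" by (simp add: hh_eq_inv_h)
  then show ?thesis by (simp add: d_def m_assoc inv_mult_group)
qed

lemma d_eq_one_if_commute:
  assumes "g \<otimes> h = h \<otimes> g"
  shows "d = \<one>"
proof -
  have "g \<otimes> g \<otimes> (h \<otimes> h) = g \<otimes> (g \<otimes> h) \<otimes> h" by (simp add: m_assoc)
  also have "\<dots> = g \<otimes> (h \<otimes> g) \<otimes> h" by (simp add: assms)
  also have "\<dots> = \<one>" using relator_ghgh by (simp add: m_assoc)
  finally have "g \<otimes> g = h" by (simp add: hh_eq_inv_h inv_solve_right')
  then have "d = g \<otimes> g \<otimes> inv g \<otimes> inv g" by (simp add: d_def)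
  then show ?thesis by (simp add: m_assoc)
qed

lemma d_pow_neq_g:
  assumes "g \<noteq> \<one>"
  shows "d [^] (j :: nat) \<noteq> g"
proof
  assume dj: "d [^] j = g"
  then have "g \<otimes> d = d \<otimes> g" using nat_pow_commute_self[OF d_closed, of j] by simp
  then have "g \<otimes> h \<otimes> inv g \<otimes> inv g = h \<otimes> inv g"
    by (simp add: d_def m_assoc)
  then have "g \<otimes> h = h \<otimes> g" by (simp add: inv_solve_right')
  then have "d = \<one>" by (rule d_eq_one_if_commute)
  then show False using dj assms by simp
qed

lemma d_pow_neq_g_inv_h:
  assumes "g \<noteq> h"
  shows "d [^] (j :: nat) \<noteq> g \<otimes> inv h"
proof
  assume dj: "d [^] j = g \<otimes> inv h"
  then have "(g \<otimes> inv h) \<otimes> d = d \<otimes> (g \<otimes> inv h)" using nat_pow_commute_self[OF d_closed, of j] by simp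
  then have "inv g = h \<otimes> inv g \<otimes> inv h"
    by (simp add: d_def m_assoc)
  then have "g \<otimes> (h \<otimes> inv g) \<otimes> g = g \<otimes> (inv g \<otimes> h) \<otimes> g" by (simp add: inv_solve_right)
  then have "g \<otimes> h = h \<otimes> g" by (simp add: m_assoc)
  then have "d = \<one>" by (rule d_eq_one_if_commute)
  then show False using dj assms by (simp add: inv_solve_right)
qed

lemma d_pow_neq_gh:
  assumes "g \<otimes> h \<noteq> \<one>"
  shows "d [^] (j :: nat) \<noteq> g \<otimes> h"
proof
  define u where "u = g \<otimes> h"
  have u: "u \<in> carrier G" by (simp add: u_def)
  have inv_u: "inv u = u" using gh_involution u inv_equality by (simp add: u_def)
  assume dj: "d [^] j = g \<otimes> h"
  \<comment> \<open>u commutes with d as a power of it, but also inverts it, so d is an involution\<close>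
  then have "u \<otimes> d = d \<otimes> u" using nat_pow_commute_self[OF d_closed, of j] by (simp add: u_def)
  then have "u \<otimes> d \<otimes> inv u = d" using u by (simp add: m_assoc)
  moreover have "u \<otimes> d \<otimes> inv u = inv d"
    using involution_inverts_commutator[OF u h_closed] gh_involution commutator_gh_h_eq_inv_d
    by (simp add: u_def)
  ultimately have "inv d = d" by simp
  then have "d \<otimes> d = \<one>" using r_inv[OF d_closed] by simp
  then have "d [^] j = \<one> \<or> d [^] j = d"
    by (induction j) auto
  moreover have "d \<noteq> u"
  proof
    assume "d = u"
    then have "inv u = u \<otimes> inv h \<otimes> inv u \<otimes> h"
      using commutator_gh_h_eq_inv_d by (simp add: u_def)
    then have "u = \<one>" using u by (simp add: inv_u m_assoc inv_solve_left')
    then show False using assms by (simp add: u_def)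
  qed
  ultimately show False using dj assms by (auto simp: u_def)
qed

lemma nilpotent_d_pow_eq_one:
  assumes "nilpotent_class_le G n" "g \<noteq> \<one>" "g \<noteq> h" "h \<noteq> \<one>"
  shows "0 < n" "d [^] (2 ^ (n - 1) :: nat) = \<one>"
proof -
  have "g \<otimes> h \<noteq> h" using assms(2) by simp
  moreover have "g \<otimes> h \<noteq> inv h"
  proof
    assume "g \<otimes> h = inv h"
    then have "g = inv h \<otimes> inv h" by (simp add: inv_solve_right)
    then show False using assms(3) hh_eq_inv_h by (simp flip: inv_mult_group)
  qed
  ultimately have comm_n: "itcomm G n (g \<otimes> h) h = \<one>"
    using assms(1) by (simp add: nilpotent_class_le_def equiv_inv_def)
  then show "0 < n" using assms(4) by (cases n) auto
  then have "inv (d [^] (2 ^ (n - 1) :: nat)) = itcomm G n (g \<otimes> h) h"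
    using itcomm_involution[OF _ h_closed gh_involution, of "n - 1"] commutator_gh_h_eq_inv_d
    by (simp add: nat_pow_inv)
  then show "d [^] (2 ^ (n - 1) :: nat) = \<one>"
    using comm_n by simp
qed

lemma d_pow_neq_conj_h:
  assumes "d [^] (2 ^ k :: nat) = \<one>" "h \<noteq> \<one>"
  shows "d [^] (j :: nat) \<noteq> g \<otimes> h \<otimes> inv g"
proof
  define x where "x = g \<otimes> h \<otimes> inv g"
  have x: "x \<in> carrier G" by (simp add: x_def)
  assume "d [^] j = g \<otimes> h \<otimes> inv g"
  then have "x [^] (2 ^ k :: nat) = (d [^] j) [^] (2 ^ k :: nat)"
    by (simp only: x_def)
  also have "\<dots> = (d [^] (2 ^ k :: nat)) [^] j"
    by (simp add: nat_pow_pow mult.commute)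
  finally have "x [^] (2 ^ k :: nat) = \<one>" using assms(1) by simp
  moreover have "x [^] (3 :: nat) = \<one>"
    using conj_nat_pow[of g h 3] by (simp add: x_def h_cube)
  ultimately have "x = \<one>"
    using eq_one_if_coprime_exponents[OF x] by simp
  then show False using assms(2) by (simp add: x_def inv_solve_right')
qed

(* The vertex reached after the first i letters of the word (g^-1 h g^-1)^M read from 1,
   where M is the order of d; the letter g^-1 h g^-1 is the conjugate g^-1 d g. *)
definition walk_vertex :: "nat \<Rightarrow> 'a" where
  "walk_vertex i = inv g \<otimes> d [^] (i div 3) \<otimes> [g, \<one>, h] ! (i mod 3)"

lemma walk_vertex_closed [simp]: "walk_vertex i \<in> carrier G"
proof -
  have "[g, \<one>, h] ! (i mod 3) \<in> carrier G" by (simp add: nth_Cons')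
  then show ?thesis by (simp add: walk_vertex_def)
qed

lemma walk_vertex_Suc: "walk_vertex (Suc i) = walk_vertex i \<otimes> [inv g, h, inv g] ! (i mod 3)"
proof -
  consider "i mod 3 = 0" | "i mod 3 = 1" | "i mod 3 = 2" by arith
  then show ?thesis
  proof cases
    case 1
    then have "Suc i div 3 = i div 3" "Suc i mod 3 = 1" by presburger+
    then show ?thesis using 1 by (simp add: walk_vertex_def m_assoc)
  next
    case 2
    then have "Suc i div 3 = i div 3" "Suc i mod 3 = 2" by presburger+
    then show ?thesis using 2 by (simp add: walk_vertex_def m_assoc)
  next
    case 3
    then have "Suc i div 3 = Suc (i div 3)" "Suc i mod 3 = 0" by presburger+
    then show ?thesis using 3 by (simp add: walk_vertex_def m_assoc d_def)
  qed
qed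

lemma walk_vertex_eq_iff:
  assumes "x \<in> carrier G"
  shows "walk_vertex i = x \<longleftrightarrow> d [^] (i div 3) = g \<otimes> x \<otimes> inv ([g, \<one>, h] ! (i mod 3))"
proof -
  define t where "t = [g, \<one>, h] ! (i mod 3)"
  have t: "t \<in> carrier G" by (simp add: t_def nth_Cons')
  have "walk_vertex i = x \<longleftrightarrow> d [^] (i div 3) \<otimes> t = g \<otimes> x"
    using assms t by (simp add: walk_vertex_def t_def m_assoc inv_solve_left')
  also have "\<dots> \<longleftrightarrow> d [^] (i div 3) = g \<otimes> x \<otimes> inv t"
    using assms t inv_solve_right[of "d [^] (i div 3)" "g \<otimes> x" t] by auto
  finally show ?thesis by (simp add: t_def)
qed

lemma walk_vertex_0: "walk_vertex 0 = \<one>"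
  by (simp add: walk_vertex_def)

lemma walk_vertex_1: "walk_vertex 1 = inv g"
  by (simp add: walk_vertex_def)

lemma walk_vertex_period: "walk_vertex (3 * ord d) = \<one>"
  by (simp add: walk_vertex_def)

lemma walk_vertex_before_period:
  assumes "0 < ord d"
  shows "walk_vertex (3 * ord d - 1) = g"
proof -
  obtain m where m: "ord d = Suc m" using assms by (cases "ord d") auto
  then have idx: "3 * ord d - 1 = 3 * m + 2" "(3 * m + 2) div 3 = m" "(3 * m + 2) mod 3 = 2"
    by presburger+
  have "inv d = d [^] m"
    using m pow_ord_eq_1[OF d_closed] by (simp add: inv_equality)
  then have "d [^] m = g \<otimes> g \<otimes> inv h"
    by (simp add: d_def inv_mult_group m_assoc)
  then show ?thesis
    unfolding idx walk_vertex_def by (simp add: m_assoc)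
qed

lemma walk_vertex_avoids:
  assumes "g \<noteq> \<one>" "g \<noteq> h" "g \<otimes> h \<noteq> \<one>" "h \<noteq> \<one>" "d [^] (2 ^ k :: nat) = \<one>"
    and "0 < i" "i < 3 * ord d"
  shows "walk_vertex i \<noteq> \<one>" "walk_vertex i \<noteq> h"
proof -
  define j where "j = i div 3"
  consider "i mod 3 = 0" | "i mod 3 = 1" | "i mod 3 = 2" by arith
  then have "walk_vertex i \<noteq> \<one> \<and> walk_vertex i \<noteq> h"
  proof cases
    case 1
    then have "0 < j" "j < ord d" using assms(6,7) by (auto simp: j_def)
    then have "d [^] j \<noteq> \<one>" by (auto simp: pow_eq_id dest: nat_dvd_not_less)
    then show ?thesis
      using d_pow_neq_conj_h[OF assms(5,4)] 1 by (simp add: walk_vertex_eq_iff flip: j_def)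
  next
    case 2
    then show ?thesis
      using d_pow_neq_g[OF assms(1)] d_pow_neq_gh[OF assms(3)]
      by (simp add: walk_vertex_eq_iff flip: j_def)
  next
    case 3
    then show ?thesis
      using d_pow_neq_g[OF assms(1)] d_pow_neq_g_inv_h[OF assms(2)]
      by (simp add: walk_vertex_eq_iff m_assoc flip: j_def)
  qed
  then show "walk_vertex i \<noteq> \<one>" "walk_vertex i \<noteq> h" by auto
qed

lemma closed_walk_inv_g_to_g:
  assumes "inv g \<in> S" "h \<in> S"
    and "g \<noteq> \<one>" "g \<noteq> h" "g \<otimes> h \<noteq> \<one>" "h \<noteq> \<one>" "d [^] (2 ^ k :: nat) = \<one>"
    and "3 * 2 ^ k \<le> r"
  shows "sg_conn (ball_del_verts G S r \<one> {\<one>, h}) (ball_del_edges G S r \<one> {\<one>, h}) (inv g) g"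
proof -
  define M where "M = ord d"
  have "M dvd 2 ^ k" using assms(7) by (simp add: M_def pow_eq_id)
  then have M: "0 < M" "M \<le> 2 ^ k" by (auto intro: dvd_imp_le gr0I)
  define ws where "ws = map walk_vertex [0..<Suc (3 * M)]"
  have ws_nth: "ws ! i = walk_vertex i" if "i \<le> 3 * M" for i
    using that by (simp add: ws_def nth_map_upt del: upt_Suc)
  have "is_walk G S ws"
    unfolding ws_def
  proof (rule is_walk_map_upt)
    show "\<exists>s\<in>S. walk_vertex (Suc i) = walk_vertex i \<otimes> s" for i
      using assms(1,2) by (auto simp: walk_vertex_Suc nth_Cons')
  qed simp
  then have "closed_walk_through G S r \<one> ws"
    using M assms(8) ws_nth[of 0] ws_nth[of "3 * M"]
    by (auto simp: closed_walk_through_def ws_def hd_map last_map walk_vertex_0 walk_vertex_period M_def)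
  moreover have "ws ! i \<notin> {\<one>, h}" if "0 < i" "Suc i < length ws" for i
    using that walk_vertex_avoids[OF assms(3-7)] ws_nth by (simp add: ws_def M_def)
  ultimately have "sg_conn (ball_del_verts G S r \<one> {\<one>, h}) (ball_del_edges G S r \<one> {\<one>, h})
      (ws ! 1) (ws ! (3 * M - 1))"
    using M by (intro closed_walk_interior_conn) (auto simp: ws_def)
  moreover have "ws ! 1 = inv g"
    using ws_nth[of 1] M walk_vertex_1 by simp
  moreover have "ws ! (3 * M - 1) = g"
    using ws_nth[of "3 * M - 1"] M walk_vertex_before_period by (simp add: M_def)
  ultimately show ?thesis by simp
qed

end

lemma (in group) not_traverses_at_if_relator_morphemes:
  assumes "nilpotent_class_le G n" "generating_set G S" "\<one> \<notin> S" "2 ^ (n + 2) \<le> r"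
    and "g \<in> S" "h \<in> S"
    and m1: "morpheme G S [inv g, h, h, inv g, inv h]"
    and m2: "morpheme G S [g, h, g, h]"
  shows "\<not> traverses_at G S r \<one> h g \<one>"
proof -
  have S: "S \<subseteq> carrier G" "inv g \<in> S"
    using assms(2,5) by (auto simp: generating_set_def)
  have gh: "g \<in> carrier G" "h \<in> carrier G" "g \<noteq> \<one>" "h \<noteq> \<one>"
    using S assms(3,5,6) by auto
  interpret relator_pair G g h
    using morpheme_eval[OF m1] morpheme_eval[OF m2] gh
    by unfold_locales (simp_all add: word_eval_def m_assoc)
  have "g \<noteq> h" "g \<otimes> h \<noteq> \<one>"
    using morpheme_prefix_neq_one[OF m1, of 2] morpheme_prefix_neq_one[OF m2, of 2] gh
    by (auto simp: word_eval_def)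
  note d_pow = nilpotent_d_pow_eq_one[OF assms(1) gh(3) \<open>g \<noteq> h\<close> gh(4)]
  have "3 * 2 ^ (n - 1) \<le> r"
    using d_pow(1) assms(4) by (cases n) auto
  then have "sg_conn (ball_del_verts G S r \<one> {\<one>, h}) (ball_del_edges G S r \<one> {\<one>, h}) (inv g) g"
    using closed_walk_inv_g_to_g S(2) assms(6) gh \<open>g \<noteq> h\<close> \<open>g \<otimes> h \<noteq> \<one>\<close> d_pow(2)
    by blast
  then show ?thesis
    using traverses_at_not_conn[of G S r \<one> h g \<one>] by auto
qed

theorem proposition7p1:
  fixes G :: "('a, 'b) monoid_scheme" and S :: "'a set" and n r :: nat and h :: 'a
  assumes "group G"
    and "nilpotent_class_le G n"
    and "generating_set G S"
    and "\<one>\<^bsub>G\<^esub> \<notin> S"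
    and "r \<ge> 2 ^ (n + 2)"
    and "h \<in> S"
    and "local_2sep G S r \<one>\<^bsub>G\<^esub> h"
    and "\<forall>v\<in>carrier G. \<not> local_cutvertex G S r v"
    and "h \<otimes>\<^bsub>G\<^esub> h \<noteq> \<one>\<^bsub>G\<^esub>"
  shows "\<not> (\<exists>g\<in>S. traverses_at G S r \<one>\<^bsub>G\<^esub> h g \<one>\<^bsub>G\<^esub>
              \<and> strongly_traverses G S r \<one>\<^bsub>G\<^esub> h [g, h, h]
              \<and> morpheme G S [inv\<^bsub>G\<^esub> g, h, h, inv\<^bsub>G\<^esub> g, inv\<^bsub>G\<^esub> h]
              \<and> morpheme G S [g, h, g, h])"
  using group.not_traverses_at_if_relator_morphemes[OF assms(1-5) _ assms(6)] by blast

end
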